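(* Let $X=(X_n)_{n\in\mathbb{Z}}$ be a stationary and ergodic sequence of integer-valued random variables, and let $\mathbb{Z}^R_X(0)$ be the connected component of $0$ in the record graph of $X$. Then $\mathbb{P}[\mathbb{Z}^R_X(0)\text{ is of class }\mathcal{I}/\mathcal{I}]\in\{0,1\}$ and $\mathbb{P}[\mathbb{Z}^R_X(0)\text{ is of class }\mathcal{I}/\mathcal{F}]\in\{0,1\}$.
   Context: For a sequence $x=(x_n)_{n\in\mathbb{Z}}$ write $y(j,k)=\sum_{l=j}^{k-1}x_l$ for $j<k$. The record map is $R_x(i)=\inf\{n>i: y(i,n)\ge0\}$ if this set is nonempty, and $R_x(i)=i$ otherwise. The record graph has vertex set $\mathbb{Z}$ and an edge $i\to R_x(i)$ whenever $R_x(i)\ne i$; components are in the undirected sense. For a component $C$, $u,v\in C$ lie in the same foil if $R_x^n(u)=R_x^n(v)$ for some $n\ge1$. $C$ is of class $\mathcal{I}/\mathcal{I}$ if it is infinite and all foils are infinite, and of class $\mathcal{I}/\mathcal{F}$ if it is infinite and all foils are finite. *)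

theory Defs
  imports "HOL-Probability.Probability"
begin

definition ysum :: "(int \<Rightarrow> int) \<Rightarrow> int \<Rightarrow> int \<Rightarrow> int" where
  "ysum x j k = (\<Sum>l\<in>{j..<k}. x l)"

definition record_map :: "(int \<Rightarrow> int) \<Rightarrow> int \<Rightarrow> int" where
  "record_map x i =
     (if \<exists>n>i. ysum x i n \<ge> 0 then (LEAST n. n > i \<and> ysum x i n \<ge> 0) else i)"

definition record_edges :: "(int \<Rightarrow> int) \<Rightarrow> (int \<times> int) set" where
  "record_edges x = {(i, record_map x i) | i. record_map x i \<noteq> i}"

definition record_component :: "(int \<Rightarrow> int) \<Rightarrow> int \<Rightarrow> int set" where
  "record_component x u = {v. (u, v) \<in> (record_edges x \<union> (record_edges x)\<inverse>)\<^sup>*}"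

definition foil :: "(int \<Rightarrow> int) \<Rightarrow> int set \<Rightarrow> int \<Rightarrow> int set" where
  "foil x C u = {v \<in> C. \<exists>n::nat. n \<ge> 1 \<and> (record_map x ^^ n) u = (record_map x ^^ n) v}"

definition class_II :: "(int \<Rightarrow> int) \<Rightarrow> int set \<Rightarrow> bool" where
  "class_II x C \<longleftrightarrow> infinite C \<and> (\<forall>u\<in>C. infinite (foil x C u))"

definition class_IF :: "(int \<Rightarrow> int) \<Rightarrow> int set \<Rightarrow> bool" where
  "class_IF x C \<longleftrightarrow> infinite C \<and> (\<forall>u\<in>C. finite (foil x C u))"

definition seq_space :: "(int \<Rightarrow> int) measure" where
  "seq_space = PiM UNIV (\<lambda>_::int. count_space (UNIV :: int set))"

definition shift :: "(int \<Rightarrow> int) \<Rightarrow> (int \<Rightarrow> int)" where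
  "shift x = (\<lambda>n. x (n + 1))"

definition stationary_seq :: "'a measure \<Rightarrow> (int \<Rightarrow> 'a \<Rightarrow> int) \<Rightarrow> bool" where
  "stationary_seq M X \<longleftrightarrow>
     distr M seq_space (\<lambda>\<omega> n. X (n + 1) \<omega>) = distr M seq_space (\<lambda>\<omega> n. X n \<omega>)"

definition ergodic_seq :: "'a measure \<Rightarrow> (int \<Rightarrow> 'a \<Rightarrow> int) \<Rightarrow> bool" where
  "ergodic_seq M X \<longleftrightarrow>
     (\<forall>A \<in> sets seq_space. shift -` A = A \<longrightarrow>
        measure M {\<omega> \<in> space M. (\<lambda>n. X n \<omega>) \<in> A} \<in> {0, 1})"

end

theory Submission
  imports Defs
begin

(* Shifting the sequence by one turns the component of 0 into (a translate of) the component
   of 1, so it suffices to see that both components have the same class, up to a null event.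
   If 0 is not a root (R(0) > 0), the orbit of 1 runs into R(0), so 1 and 0 share their
   component. If 0 is a root and there are further roots on both sides, the components of 0
   and 1 are trapped between consecutive roots, since no orbit passes a root; both are finite
   and neither class occurs. The remaining event, 0 a root with no further root on one side,
   is null by stationarity: its translates by 0, 1, 2, ... are disjoint and equally likely.
   Ergodicity, applied to the invariant set of sequences whose shifts eventually lie in the
   class, gives the 0-1 law. *)

section \<open>Records and roots\<close>

definition record_root :: "(int \<Rightarrow> int) \<Rightarrow> int \<Rightarrow> bool" where
  "record_root x i \<longleftrightarrow> (\<forall>n>i. ysum x i n < 0)"

lemma ysum_split:
  assumes "i \<le> j" "j \<le> k"
  shows "ysum x i k = ysum x i j + ysum x j k"
proof -
  have "{i..<k} = {i..<j} \<union> {j..<k}"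
    using assms by auto
  then show ?thesis
    unfolding ysum_def by (simp add: sum.union_disjoint)
qed

lemma ysum_shift: "ysum (shift x) i n = ysum x (i + 1) (n + 1)"
  unfolding ysum_def shift_def
  by (rule sum.reindex_bij_witness[of _ "\<lambda>l. l - 1" "\<lambda>l. l + 1"]) auto

lemma record_root_shift: "record_root (shift x) i \<longleftrightarrow> record_root x (i + 1)"
  unfolding record_root_def ysum_shift by (metis add.commute add_less_cancel_left diff_add_cancel)

lemma record_root_funpow_shift: "record_root ((shift ^^ k) x) i \<longleftrightarrow> record_root x (i + int k)"
  by (induction k arbitrary: i) (simp_all add: record_root_shift ac_simps)

lemma record_map_root: "record_root x i \<Longrightarrow> record_map x i = i"
  unfolding record_root_def record_map_def by (auto simp: not_le)

lemma record_map_nonroot: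
  assumes "\<not> record_root x i"
  shows "i < record_map x i" and "0 \<le> ysum x i (record_map x i)"
    and "\<And>n. i < n \<Longrightarrow> n < record_map x i \<Longrightarrow> ysum x i n < 0"
proof -
  let ?P = "\<lambda>n. i < n \<and> 0 \<le> ysum x i n"
  obtain n where "?P n"
    using assms unfolding record_root_def by (auto simp: not_less)
  then obtain c where c: "?P c" and min: "\<And>m. ?P m \<Longrightarrow> nat (c - i) \<le> nat (m - i)"
    using ex_has_least_nat[of ?P n "\<lambda>m. nat (m - i)"] by blast
  have below: "ysum x i m < 0" if "i < m" "m < c" for m
    using min[of m] that by fastforce
  have "record_map x i = c"
    unfolding record_map_def using c by (auto intro!: Least_equality) (meson below not_le)
  then show "i < record_map x i" "0 \<le> ysum x i (record_map x i)"
    and "\<And>n. i < n \<Longrightarrow> n < record_map x i \<Longrightarrow> ysum x i n < 0"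
    using c below by auto
qed

lemma record_map_ge: "i \<le> record_map x i"
  by (cases "record_root x i") (simp_all add: record_map_root record_map_nonroot less_imp_le)

lemma record_map_eq_iff:
  "record_map x i = c \<longleftrightarrow>
     (i < c \<and> 0 \<le> ysum x i c \<and> (\<forall>n. i < n \<and> n < c \<longrightarrow> ysum x i n < 0)) \<or> (c = i \<and> record_root x i)"
proof (cases "record_root x i")
  case True
  then show ?thesis
    by (auto simp: record_map_root record_root_def not_le)
next
  case False
  note R = record_map_nonroot[OF False]
  have "c = record_map x i" if "i < c" "0 \<le> ysum x i c" "\<forall>n. i < n \<and> n < c \<longrightarrow> ysum x i n < 0"
    using that R by (metis linorder_neqE not_le)
  then show ?thesis
    using R False by auto
qed

lemma record_map_shift: "record_map (shift x) i = record_map x (i + 1) - 1"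
proof -
  have "(\<forall>n. i < n \<and> n < c \<longrightarrow> ysum x (i + 1) (n + 1) < 0) \<longleftrightarrow>
        (\<forall>n. i + 1 < n \<and> n < c + 1 \<longrightarrow> ysum x (i + 1) n < 0)" for c
  proof
    assume "\<forall>n. i < n \<and> n < c \<longrightarrow> ysum x (i + 1) (n + 1) < 0"
    then show "\<forall>n. i + 1 < n \<and> n < c + 1 \<longrightarrow> ysum x (i + 1) n < 0"
      by (metis add_less_cancel_right diff_add_cancel)
  qed auto
  then have "record_map (shift x) i = c \<longleftrightarrow> record_map x (i + 1) = c + 1" for c
    unfolding record_map_eq_iff[of "shift x"] record_map_eq_iff[of x] ysum_shift record_root_shift
    by auto
  then show ?thesis
    by simp
qed

lemma funpow_record_map_shift: "(record_map (shift x) ^^ n) u = (record_map x ^^ n) (u + 1) - 1"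
  by (induction n) (simp_all add: record_map_shift)

lemma funpow_record_map_ge: "t \<le> (record_map x ^^ n) t"
  by (induction n) (auto intro: order_trans[OF _ record_map_ge])

lemma record_map_le_root:
  assumes r: "record_root x r" and "t \<le> r"
  shows "record_map x t \<le> r"
proof (cases "record_root x t")
  case True
  then show ?thesis
    using \<open>t \<le> r\<close> by (simp add: record_map_root)
next
  case False
  note R = record_map_nonroot[OF False]
  show ?thesis
  proof (rule ccontr)
    assume "\<not> record_map x t \<le> r"
    moreover have "t \<noteq> r"
      using r False by auto
    ultimately have "ysum x t r < 0" and "ysum x r (record_map x t) < 0"
      using R(3) \<open>t \<le> r\<close> r unfolding record_root_def by auto
    moreover have "ysum x t (record_map x t) = ysum x t r + ysum x r (record_map x t)"
      using \<open>t \<le> r\<close> \<open>\<not> record_map x t \<le> r\<close> by (intro ysum_split) auto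
    ultimately show False
      using R(2) by linarith
  qed
qed

lemma funpow_record_map_le_root: "record_root x r \<Longrightarrow> t \<le> r \<Longrightarrow> (record_map x ^^ n) t \<le> r"
  by (induction n) (simp_all add: record_map_le_root)

(* For i < t <= R(i): y(t, R(i)) >= 0 because y(i, t) < 0, hence t < R(t) <= R(i) and the orbit
   of t climbs to R(i). *)
lemma funpow_record_map_reaches:
  assumes i: "\<not> record_root x i" and "i < t" "t \<le> record_map x i"
  shows "\<exists>a. (record_map x ^^ a) t = record_map x i"
  using \<open>i < t\<close> \<open>t \<le> record_map x i\<close>
proof (induction "nat (record_map x i - t)" arbitrary: t rule: less_induct)
  case less
  note R = record_map_nonroot[OF i]
  show ?case
  proof (cases "t = record_map x i")
    case True
    then show ?thesis
      by (metis funpow_0)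
  next
    case False
    then have "t < record_map x i"
      using less.prems by simp
    have "ysum x i (record_map x i) = ysum x i t + ysum x t (record_map x i)"
      using less.prems by (intro ysum_split) auto
    moreover have "ysum x i t < 0"
      using R(3) less.prems \<open>t < record_map x i\<close> by simp
    ultimately have "0 \<le> ysum x t (record_map x i)"
      using R(2) by linarith
    then have t: "\<not> record_root x t"
      using \<open>t < record_map x i\<close> unfolding record_root_def by auto
    have "record_map x t \<le> record_map x i"
      using record_map_nonroot(3)[OF t] \<open>0 \<le> ysum x t (record_map x i)\<close> \<open>t < record_map x i\<close>
      by (meson not_le)
    then obtain a where "(record_map x ^^ a) (record_map x t) = record_map x i"
      using less.hyps[of "record_map x t"] record_map_nonroot(1)[OF t] less.prems by auto
    then have "(record_map x ^^ Suc a) t = record_map x i"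
      by (simp add: funpow_Suc_right del: funpow.simps)
    then show ?thesis ..
  qed
qed

section \<open>Components of the record graph\<close>

lemma record_component_refl: "u \<in> record_component x u"
  unfolding record_component_def by simp

lemma record_component_sym:
  assumes "v \<in> record_component x u"
  shows "u \<in> record_component x v"
proof -
  let ?E = "record_edges x \<union> (record_edges x)\<inverse>"
  have "(v, u) \<in> (?E\<inverse>)\<^sup>*"
    using assms unfolding record_component_def by (simp add: rtrancl_converseI)
  moreover have "?E\<inverse> = ?E"
    by auto
  ultimately show ?thesis
    unfolding record_component_def by simp
qed

lemma record_component_trans:
  "v \<in> record_component x u \<Longrightarrow> w \<in> record_component x v \<Longrightarrow> w \<in> record_component x u"
  unfolding record_component_def mem_Collect_eq by (rule rtrancl_trans)

lemma record_component_eq: "v \<in> record_component x u \<Longrightarrow> record_component x v = record_component x u"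
  by (meson record_component_sym record_component_trans subsetI subset_antisym)

lemma record_map_in_component: "record_map x u \<in> record_component x u"
  unfolding record_component_def record_edges_def by (cases "record_map x u = u") auto

lemma funpow_record_map_in_component: "(record_map x ^^ n) u \<in> record_component x u"
  by (induction n)
    (auto intro: record_component_refl record_component_trans[OF _ record_map_in_component])

lemma mem_record_component_iff:
  "v \<in> record_component x u \<longleftrightarrow> (\<exists>a b. (record_map x ^^ a) u = (record_map x ^^ b) v)"
proof
  assume "v \<in> record_component x u"
  then have "(u, v) \<in> (record_edges x \<union> (record_edges x)\<inverse>)\<^sup>*"
    unfolding record_component_def by simp
  then show "\<exists>a b. (record_map x ^^ a) u = (record_map x ^^ b) v"
  proof (induction rule: rtrancl_induct)
    case base
    show ?case
      by (metis funpow_0)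
  next
    case (step y z)
    then obtain a b where ab: "(record_map x ^^ a) u = (record_map x ^^ b) y"
      by blast
    from step.hyps(2) consider "z = record_map x y" | "y = record_map x z"
      unfolding record_edges_def by auto
    then show ?case
    proof cases
      case 1
      have "(record_map x ^^ Suc a) u = record_map x ((record_map x ^^ b) y)"
        using ab by simp
      also have "\<dots> = (record_map x ^^ b) z"
        using 1 by (simp add: funpow_swap1)
      finally show ?thesis by blast
    next
      case 2
      then have "(record_map x ^^ a) u = (record_map x ^^ Suc b) z"
        using ab by (simp add: funpow_Suc_right del: funpow.simps)
      then show ?thesis by blast
    qed
  qed
next
  assume "\<exists>a b. (record_map x ^^ a) u = (record_map x ^^ b) v"
  then obtain a b where ab: "(record_map x ^^ a) u = (record_map x ^^ b) v"
    by blast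
  have "v \<in> record_component x ((record_map x ^^ a) u)"
    unfolding ab by (rule record_component_sym[OF funpow_record_map_in_component])
  then show "v \<in> record_component x u"
    by (rule record_component_trans[OF funpow_record_map_in_component])
qed

lemma record_component_succ_nonroot:
  assumes "\<not> record_root x i"
  shows "record_component x (i + 1) = record_component x i"
proof -
  obtain a where "(record_map x ^^ a) (i + 1) = record_map x i"
    using funpow_record_map_reaches[OF assms, of "i + 1"] record_map_nonroot(1)[OF assms] by auto
  then have "(record_map x ^^ 1) i = (record_map x ^^ a) (i + 1)"
    by simp
  then have "i + 1 \<in> record_component x i"
    unfolding mem_record_component_iff by blast
  then show ?thesis
    by (rule record_component_eq)
qed

lemma record_component_between_roots:
  assumes r: "record_root x r" and s: "record_root x s" and "r < u" "u \<le> s"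
  shows "record_component x u \<subseteq> {r<..s}"
proof
  fix v
  assume "v \<in> record_component x u"
  then obtain a b where ab: "(record_map x ^^ a) u = (record_map x ^^ b) v"
    unfolding mem_record_component_iff by blast
  have "(record_map x ^^ a) u \<le> s"
    using funpow_record_map_le_root[OF s \<open>u \<le> s\<close>] .
  then have "v \<le> s"
    using funpow_record_map_ge[where x = x and t = v and n = b] ab by simp
  moreover have "r < v"
  proof (rule ccontr)
    assume "\<not> r < v"
    then have "(record_map x ^^ b) v \<le> r"
      using funpow_record_map_le_root[OF r] by simp
    then show False
      using funpow_record_map_ge[where x = x and t = u and n = a] ab \<open>r < u\<close> by simp
  qed
  ultimately show "v \<in> {r<..s}"
    by simp
qed

lemma mem_image_minus_one_iff: "v \<in> (\<lambda>v. v - 1) ` S \<longleftrightarrow> v + 1 \<in> (S :: int set)"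
proof
  assume "v + 1 \<in> S"
  then show "v \<in> (\<lambda>v. v - 1) ` S"
    by (rule rev_image_eqI) simp
qed auto

lemma record_component_shift:
  "record_component (shift x) u = (\<lambda>v. v - 1) ` record_component x (u + 1)"
proof -
  have "v \<in> record_component (shift x) u \<longleftrightarrow> v + 1 \<in> record_component x (u + 1)" for v
    unfolding mem_record_component_iff funpow_record_map_shift by simp
  then show ?thesis
    by (simp add: set_eq_iff mem_image_minus_one_iff)
qed

lemma foil_shift: "foil (shift x) ((\<lambda>v. v - 1) ` C) (w - 1) = (\<lambda>v. v - 1) ` foil x C w"
  by (rule set_eqI) (simp add: mem_image_minus_one_iff foil_def funpow_record_map_shift)

lemma class_II_shift: "class_II (shift x) ((\<lambda>v. v - 1) ` C) \<longleftrightarrow> class_II x C"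
  unfolding class_II_def by (simp add: foil_shift finite_image_iff inj_on_def)

lemma class_IF_shift: "class_IF (shift x) ((\<lambda>v. v - 1) ` C) \<longleftrightarrow> class_IF x C"
  unfolding class_IF_def by (simp add: foil_shift finite_image_iff inj_on_def)

definition one_sided_root :: "(int \<Rightarrow> int) \<Rightarrow> bool" where
  "one_sided_root x \<longleftrightarrow> record_root x 0 \<and> ((\<forall>n>0. \<not> record_root x n) \<or> (\<forall>n<0. \<not> record_root x n))"

lemma record_component_one_cases:
  assumes "\<not> one_sided_root x"
  shows "record_component x 1 = record_component x 0
    \<or> finite (record_component x 0) \<and> finite (record_component x 1)"
proof (cases "record_root x 0")
  case False
  then show ?thesis
    using record_component_succ_nonroot[OF False] by simp
next
  case True
  then obtain r s where "r < 0" "record_root x r" "0 < s" "record_root x s"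
    using assms unfolding one_sided_root_def by auto
  then have "record_component x 0 \<subseteq> {r<..0}" "record_component x 1 \<subseteq> {0<..s}"
    using record_component_between_roots True by auto
  then show ?thesis
    by (meson finite_greaterThanAtMost_int finite_subset)
qed

lemma class_II_record_component_shift:
  assumes "\<not> one_sided_root x"
  shows "class_II (shift x) (record_component (shift x) 0) \<longleftrightarrow> class_II x (record_component x 0)"
  using record_component_one_cases[OF assms] unfolding record_component_shift class_II_shift
  by (auto simp: class_II_def)

lemma class_IF_record_component_shift:
  assumes "\<not> one_sided_root x"
  shows "class_IF (shift x) (record_component (shift x) 0) \<longleftrightarrow> class_IF x (record_component x 0)"
  using record_component_one_cases[OF assms] unfolding record_component_shift class_IF_shift
  by (auto simp: class_IF_def)

section \<open>Measurability\<close>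

lemma measurable_coordinate [measurable]: "(\<lambda>x. x l) \<in> measurable seq_space (count_space UNIV)"
  unfolding seq_space_def by measurable

lemma measurable_ysum_real [measurable]:
  "(\<lambda>x. real_of_int (ysum x i n)) \<in> borel_measurable seq_space"
proof -
  have [measurable]: "(\<lambda>x. real_of_int (x l)) \<in> borel_measurable seq_space" for l
    using measurable_compose[OF measurable_coordinate] by (simp add: measurable_count_space_eq1)
  show ?thesis
    unfolding ysum_def of_int_sum by measurable
qed

lemma pred_ysum_nonneg [measurable]: "Measurable.pred seq_space (\<lambda>x. 0 \<le> ysum x i n)"
proof -
  have "Measurable.pred seq_space (\<lambda>x. 0 \<le> real_of_int (ysum x i n))"
    by measurable
  then show ?thesis
    by simp
qed

lemma pred_record_root [measurable]: "Measurable.pred seq_space (\<lambda>x. record_root x i)"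
  unfolding record_root_def not_le[symmetric] by measurable

lemma measurable_record_map [measurable]:
  "(\<lambda>x. record_map x i) \<in> measurable seq_space (count_space UNIV)"
proof -
  have [measurable]: "Measurable.pred seq_space (\<lambda>x. record_map x i = c)" for c
    unfolding record_map_eq_iff not_le[symmetric] by measurable
  have "(\<lambda>x. THE c. record_map x i = c) \<in> measurable seq_space (count_space UNIV)"
    by (rule measurable_THE[where I = UNIV]) auto
  then show ?thesis
    by simp
qed

lemma measurable_funpow_record_map [measurable]:
  "(\<lambda>x. (record_map x ^^ n) u) \<in> measurable seq_space (count_space UNIV)"
proof (induction n)
  case (Suc n)
  then show ?case
    using measurable_compose_countable[where f = "\<lambda>j x. record_map x j", OF measurable_record_map Suc]
    by simp
qed simp

lemma pred_finite_int [measurable (raw)]: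
  fixes S :: "'a \<Rightarrow> int set"
  assumes "\<And>v. Measurable.pred M (\<lambda>x. v \<in> S x)"
  shows "Measurable.pred M (\<lambda>x. finite (S x))"
proof -
  have "Measurable.pred M (\<lambda>x. \<not> (\<forall>m. \<exists>v. m < \<bar>v\<bar> \<and> v \<in> S x))"
    by (intro pred_intros_logic(2) pred_intros_countable pred_intros_conj1' assms)
  then show ?thesis
    unfolding infinite_int_iff_unbounded[symmetric] by simp
qed

lemma pred_mem_record_component [measurable]:
  "Measurable.pred seq_space (\<lambda>x. v \<in> record_component x u)"
  unfolding mem_record_component_iff by measurable

lemma pred_mem_foil [measurable]:
  "Measurable.pred seq_space (\<lambda>x. v \<in> foil x (record_component x u) w)"
  unfolding foil_def mem_Collect_eq by measurable

lemma pred_class_II [measurable]: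
  "Measurable.pred seq_space (\<lambda>x. class_II x (record_component x u))"
  unfolding class_II_def Ball_def by measurable

lemma pred_class_IF [measurable]:
  "Measurable.pred seq_space (\<lambda>x. class_IF x (record_component x u))"
  unfolding class_IF_def Ball_def by measurable

lemma pred_one_sided_root [measurable]: "Measurable.pred seq_space one_sided_root"
  unfolding one_sided_root_def by measurable

lemma measurable_shift [measurable]: "shift \<in> measurable seq_space seq_space"
  unfolding shift_def seq_space_def by (rule measurable_PiM_single') (auto simp: space_PiM)

lemma measurable_funpow_shift [measurable]: "shift ^^ k \<in> measurable seq_space seq_space"
  by (induction k) (simp_all add: measurable_comp)

lemma measurable_sample_path:
  "(\<And>n. X n \<in> measurable M (count_space UNIV)) \<Longrightarrow> (\<lambda>\<omega> n. X n \<omega>) \<in> measurable M seq_space"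
  unfolding seq_space_def by (rule measurable_PiM_single') (auto simp: space_PiM)

section \<open>Stationarity and ergodicity\<close>

lemma Collect_in_sets_seq_space: "Measurable.pred seq_space P \<Longrightarrow> Collect P \<in> sets seq_space"
  by (simp add: pred_def seq_space_def space_PiM)

lemma stationary_seq_distr_funpow_shift:
  assumes X: "\<And>n. X n \<in> measurable M (count_space UNIV)" and "stationary_seq M X"
  shows "distr M seq_space (\<lambda>\<omega>. (shift ^^ k) (\<lambda>n. X n \<omega>)) = distr M seq_space (\<lambda>\<omega> n. X n \<omega>)"
proof (induction k)
  case (Suc k)
  have [measurable]: "(\<lambda>\<omega> n. X n \<omega>) \<in> measurable M seq_space"
    "(\<lambda>\<omega> n. X (n + 1) \<omega>) \<in> measurable M seq_space"
    using X by (simp_all add: measurable_sample_path)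
  have "(\<lambda>\<omega>. (shift ^^ Suc k) (\<lambda>n. X n \<omega>)) = (shift ^^ k) \<circ> (\<lambda>\<omega> n. X (n + 1) \<omega>)"
    by (simp add: funpow_Suc_right shift_def fun_eq_iff del: funpow.simps)
  then have "distr M seq_space (\<lambda>\<omega>. (shift ^^ Suc k) (\<lambda>n. X n \<omega>))
      = distr (distr M seq_space (\<lambda>\<omega> n. X (n + 1) \<omega>)) seq_space (shift ^^ k)"
    by (simp add: distr_distr)
  also have "\<dots> = distr (distr M seq_space (\<lambda>\<omega> n. X n \<omega>)) seq_space (shift ^^ k)"
    using \<open>stationary_seq M X\<close> unfolding stationary_seq_def by simp
  also have "\<dots> = distr M seq_space (\<lambda>\<omega> n. X n \<omega>)"
    using Suc.IH by (simp add: distr_distr comp_def)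
  finally show ?case .
qed simp

lemma stationary_seq_measure_funpow_shift:
  assumes X: "\<And>n. X n \<in> measurable M (count_space UNIV)" and "stationary_seq M X"
    and S: "S \<in> sets seq_space"
  shows "measure M {\<omega> \<in> space M. (shift ^^ k) (\<lambda>n. X n \<omega>) \<in> S}
    = measure M {\<omega> \<in> space M. (\<lambda>n. X n \<omega>) \<in> S}"
proof -
  have [measurable]: "(\<lambda>\<omega> n. X n \<omega>) \<in> measurable M seq_space"
    using X by (rule measurable_sample_path)
  have "measure M {\<omega> \<in> space M. (shift ^^ k) (\<lambda>n. X n \<omega>) \<in> S}
      = measure (distr M seq_space (\<lambda>\<omega>. (shift ^^ k) (\<lambda>n. X n \<omega>))) S"
    using S by (simp add: measure_distr vimage_def Int_def conj_commute)
  also have "\<dots> = measure (distr M seq_space (\<lambda>\<omega> n. X n \<omega>)) S"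
    using stationary_seq_distr_funpow_shift[OF assms(1,2)] by simp
  also have "\<dots> = measure M {\<omega> \<in> space M. (\<lambda>n. X n \<omega>) \<in> S}"
    using S by (simp add: measure_distr vimage_def Int_def conj_commute)
  finally show ?thesis .
qed

lemma (in finite_measure) disjoint_family_equal_measure_zero:
  fixes A :: "nat \<Rightarrow> 'a set"
  assumes "range A \<subseteq> sets M" "disjoint_family A" and "\<And>k. measure M (A k) = c"
  shows "c = 0"
proof -
  have "(\<lambda>_. c) sums measure M (\<Union>k. A k)"
    using finite_measure_UNION[OF assms(1,2)] assms(3) by simp
  then show ?thesis
    using summable_const_iff sums_summable by blast
qed

lemma stationary_seq_wandering_set_null:
  assumes "prob_space M" and X: "\<And>n. X n \<in> measurable M (count_space UNIV)" and "stationary_seq M X"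
    and S: "S \<in> sets seq_space"
    and wandering: "\<And>x k. 0 < k \<Longrightarrow> x \<in> S \<Longrightarrow> (shift ^^ k) x \<notin> S"
  shows "measure M {\<omega> \<in> space M. (\<lambda>n. X n \<omega>) \<in> S} = 0"
proof -
  interpret prob_space M by fact
  have [measurable]: "(\<lambda>\<omega> n. X n \<omega>) \<in> measurable M seq_space"
    using X by (rule measurable_sample_path)
  define A where "A k = {\<omega> \<in> space M. (shift ^^ k) (\<lambda>n. X n \<omega>) \<in> S}" for k
  have "A k \<inter> A l = {}" if "k < l" for k l
  proof -
    have "(shift ^^ l) y = (shift ^^ (l - k + k)) y" for y :: "int \<Rightarrow> int"
      using that by simp
    then have "(shift ^^ l) y = (shift ^^ (l - k)) ((shift ^^ k) y)" for y :: "int \<Rightarrow> int"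
      by (simp add: funpow_add)
    then show ?thesis
      using wandering[of "l - k"] that unfolding A_def by auto
  qed
  then have "disjoint_family A"
    unfolding disjoint_family_on_def by (metis Int_commute linorder_neqE_nat)
  moreover have "range A \<subseteq> sets M"
    unfolding A_def using S by auto
  moreover have "measure M (A k) = measure M (A 0)" for k
    unfolding A_def using stationary_seq_measure_funpow_shift[OF X \<open>stationary_seq M X\<close> S] by simp
  ultimately have "measure M (A 0) = 0"
    by (intro disjoint_family_equal_measure_zero)
  then show ?thesis
    by (simp add: A_def)
qed

lemma one_sided_root_null:
  assumes "prob_space M" and X: "\<And>n. X n \<in> measurable M (count_space UNIV)" and "stationary_seq M X"
  shows "measure M {\<omega> \<in> space M. one_sided_root (\<lambda>n. X n \<omega>)} = 0"
proof -
  define R where "R = {x. record_root x 0 \<and> (\<forall>n>0. \<not> record_root x n)}"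
  define L where "L = {x. record_root x 0 \<and> (\<forall>n<0. \<not> record_root x n)}"
  have R_sets [measurable]: "R \<in> sets seq_space"
    unfolding R_def by (intro Collect_in_sets_seq_space) measurable
  have L_sets [measurable]: "L \<in> sets seq_space"
    unfolding L_def by (intro Collect_in_sets_seq_space) measurable
  interpret prob_space M by fact
  have [measurable]: "(\<lambda>\<omega> n. X n \<omega>) \<in> measurable M seq_space"
    using X by (rule measurable_sample_path)
  have R_null: "measure M {\<omega> \<in> space M. (\<lambda>n. X n \<omega>) \<in> R} = 0"
    by (rule stationary_seq_wandering_set_null[OF assms R_sets])
      (auto simp: R_def record_root_funpow_shift)
  have L_null: "measure M {\<omega> \<in> space M. (\<lambda>n. X n \<omega>) \<in> L} = 0"
  proof (rule stationary_seq_wandering_set_null[OF assms L_sets])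
    fix x and k :: nat
    assume "0 < k" "x \<in> L"
    then have "record_root ((shift ^^ k) x) (- int k)"
      by (simp add: L_def record_root_funpow_shift)
    moreover have "- int k < 0"
      using \<open>0 < k\<close> by simp
    ultimately show "(shift ^^ k) x \<notin> L"
      unfolding L_def by blast
  qed
  have "measure M {\<omega> \<in> space M. one_sided_root (\<lambda>n. X n \<omega>)}
      = measure M ({\<omega> \<in> space M. (\<lambda>n. X n \<omega>) \<in> R} \<union> {\<omega> \<in> space M. (\<lambda>n. X n \<omega>) \<in> L})"
    unfolding one_sided_root_def R_def L_def by (rule arg_cong[where f = "measure M"]) auto
  also have "\<dots> \<le> measure M {\<omega> \<in> space M. (\<lambda>n. X n \<omega>) \<in> R}
      + measure M {\<omega> \<in> space M. (\<lambda>n. X n \<omega>) \<in> L}"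
    by (intro measure_Un_le) measurable
  finally show ?thesis
    using R_null L_null measure_nonneg[of M "{\<omega> \<in> space M. one_sided_root (\<lambda>n. X n \<omega>)}"] by linarith
qed

lemma stationary_seq_AE_orbit_avoids_null:
  assumes "prob_space M" and X: "\<And>n. X n \<in> measurable M (count_space UNIV)" and "stationary_seq M X"
    and N: "N \<in> sets seq_space" and null: "measure M {\<omega> \<in> space M. (\<lambda>n. X n \<omega>) \<in> N} = 0"
  shows "AE \<omega> in M. \<forall>k. (shift ^^ k) (\<lambda>n. X n \<omega>) \<notin> N"
proof -
  interpret prob_space M by fact
  have [measurable]: "(\<lambda>\<omega> n. X n \<omega>) \<in> measurable M seq_space"
    using X by (rule measurable_sample_path)
  have "AE \<omega> in M. (shift ^^ k) (\<lambda>n. X n \<omega>) \<notin> N" for k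
  proof (rule AE_iff_measurable[THEN iffD2])
    show "{\<omega> \<in> space M. \<not> (shift ^^ k) (\<lambda>n. X n \<omega>) \<notin> N} \<in> sets M"
      using N by measurable
    show "emeasure M {\<omega> \<in> space M. \<not> (shift ^^ k) (\<lambda>n. X n \<omega>) \<notin> N} = 0"
      using stationary_seq_measure_funpow_shift[OF X \<open>stationary_seq M X\<close> N] null
      by (simp add: emeasure_eq_measure)
  qed simp
  then show ?thesis
    by (simp add: AE_all_countable)
qed

lemma vimage_shift_eventually_funpow_shift:
  "shift -` {x. \<forall>\<^sub>F k in sequentially. Q ((shift ^^ k) x)}
    = {x. \<forall>\<^sub>F k in sequentially. Q ((shift ^^ k) x)}"
proof (rule set_eqI)
  fix x :: "int \<Rightarrow> int"
  have "(\<forall>\<^sub>F k in sequentially. Q ((shift ^^ k) (shift x)))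
      \<longleftrightarrow> (\<forall>\<^sub>F k in sequentially. Q ((shift ^^ Suc k) x))"
    by (simp add: funpow_swap1)
  also have "\<dots> \<longleftrightarrow> (\<forall>\<^sub>F k in sequentially. Q ((shift ^^ k) x))"
    by (rule eventually_sequentially_Suc[of "\<lambda>k. Q ((shift ^^ k) x)"])
  finally show "x \<in> shift -` {x. \<forall>\<^sub>F k in sequentially. Q ((shift ^^ k) x)} \<longleftrightarrow>
      x \<in> {x. \<forall>\<^sub>F k in sequentially. Q ((shift ^^ k) x)}"
    by simp
qed

lemma ergodic_seq_zero_one_invariant_mod_null:
  assumes "prob_space M" and X: "\<And>n. X n \<in> measurable M (count_space UNIV)"
    and "stationary_seq M X" and "ergodic_seq M X"
    and [measurable]: "Measurable.pred seq_space Q" and N: "N \<in> sets seq_space"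
    and null: "measure M {\<omega> \<in> space M. (\<lambda>n. X n \<omega>) \<in> N} = 0"
    and invariant: "\<And>x. x \<notin> N \<Longrightarrow> Q (shift x) = Q x"
  shows "measure M {\<omega> \<in> space M. Q (\<lambda>n. X n \<omega>)} \<in> {0, 1}"
proof -
  interpret prob_space M by fact
  have [measurable]: "(\<lambda>\<omega> n. X n \<omega>) \<in> measurable M seq_space"
    using X by (rule measurable_sample_path)
  have AE_orbit: "AE \<omega> in M. \<forall>k. (shift ^^ k) (\<lambda>n. X n \<omega>) \<notin> N"
    by (rule stationary_seq_AE_orbit_avoids_null[OF assms(1-3) N null])
  have orbit: "Q ((shift ^^ k) x) = Q x" if "\<forall>k. (shift ^^ k) x \<notin> N" for x k
    using that by (induction k) (simp_all add: invariant)
  \<comment> \<open>Q is invariant only off N, but the set of sequences whose shifts eventually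
    satisfy Q is exactly invariant.\<close>
  define A where "A = {x. \<forall>\<^sub>F k in sequentially. Q ((shift ^^ k) x)}"
  have AE_A: "AE \<omega> in M. Q (\<lambda>n. X n \<omega>) \<longleftrightarrow> (\<lambda>n. X n \<omega>) \<in> A"
    using AE_orbit by eventually_elim (simp add: A_def orbit)
  have A_sets: "A \<in> sets seq_space"
    unfolding A_def eventually_sequentially by (intro Collect_in_sets_seq_space) measurable
  have "shift -` A = A"
    unfolding A_def by (rule vimage_shift_eventually_funpow_shift)
  then have "measure M {\<omega> \<in> space M. (\<lambda>n. X n \<omega>) \<in> A} \<in> {0, 1}"
    using \<open>ergodic_seq M X\<close> A_sets unfolding ergodic_seq_def by blast
  moreover have "measure M {\<omega> \<in> space M. Q (\<lambda>n. X n \<omega>)} = measure M {\<omega> \<in> space M. (\<lambda>n. X n \<omega>) \<in> A}"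
    using AE_A A_sets
    by (intro finite_measure_eq_AE) (auto elim: AE_mp)
  ultimately show ?thesis
    by simp
qed

theorem proposition3p1:
  fixes M :: "'a measure" and X :: "int \<Rightarrow> 'a \<Rightarrow> int"
  assumes "prob_space M"
    and "\<And>n. X n \<in> measurable M (count_space UNIV)"
    and "stationary_seq M X"
    and "ergodic_seq M X"
  shows "{\<omega> \<in> space M. class_II (\<lambda>n. X n \<omega>) (record_component (\<lambda>n. X n \<omega>) 0)} \<in> sets M
       \<and> measure M {\<omega> \<in> space M. class_II (\<lambda>n. X n \<omega>) (record_component (\<lambda>n. X n \<omega>) 0)} \<in> {0, 1}
       \<and> {\<omega> \<in> space M. class_IF (\<lambda>n. X n \<omega>) (record_component (\<lambda>n. X n \<omega>) 0)} \<in> sets M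
       \<and> measure M {\<omega> \<in> space M. class_IF (\<lambda>n. X n \<omega>) (record_component (\<lambda>n. X n \<omega>) 0)} \<in> {0, 1}"
proof -
  have [measurable]: "(\<lambda>\<omega> n. X n \<omega>) \<in> measurable M seq_space"
    using assms(2) by (rule measurable_sample_path)
  have N: "Collect one_sided_root \<in> sets seq_space"
    by (intro Collect_in_sets_seq_space) measurable
  have null: "measure M {\<omega> \<in> space M. (\<lambda>n. X n \<omega>) \<in> Collect one_sided_root} = 0"
    using one_sided_root_null[OF assms(1-3)] by simp
  have "measure M {\<omega> \<in> space M. class_II (\<lambda>n. X n \<omega>) (record_component (\<lambda>n. X n \<omega>) 0)} \<in> {0, 1}"
    by (rule ergodic_seq_zero_one_invariant_mod_null[OF assms _ N null])
      (simp_all add: class_II_record_component_shift)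
  moreover have "measure M {\<omega> \<in> space M. class_IF (\<lambda>n. X n \<omega>) (record_component (\<lambda>n. X n \<omega>) 0)} \<in> {0, 1}"
    by (rule ergodic_seq_zero_one_invariant_mod_null[OF assms _ N null])
      (simp_all add: class_IF_record_component_shift)
  ultimately show ?thesis
    by simp measurable
qed

end
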